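(* Let $L:\mathbb{R}^n\to\mathbb{R}$ be $\mathcal{C}^1$, convex, with a unique minimizer $z_1^*$ ($L^*=L(z_1^* )$), and with $\nabla L$ Lipschitz with constant $M>0$. Let $\zeta>0$, $\bar d(t)=\frac{3}{2(t+2)}$, $\bar\beta(t)=\frac{t-1}{t+2}$, $\bar a(\tau)=\frac{2}{\tau+2}$, and $$V_1(z,\tau):=\tfrac12|\bar a(\tau)(z_1-z_1^* )+z_2|^2+\tfrac{\zeta^2}{M}(L(z_1)-L^* ).$$ Then each maximal solution $t\mapsto(z(t),\tau(t))$ of the system $\dot z_1=z_2$, $\dot z_2=-2\bar d(\tau)z_2-\frac{\zeta^2}{M}\nabla L(z_1+\bar\beta(\tau)z_2)$, $\dot\tau=1$ on $\mathbb{R}^{2n}\times\mathbb{R}_{\ge0}$ with $\tau(0)=0$ satisfies $$V_1(z(t),t)\le\frac{9}{(t+2)^2}V_1(z(1),1)\quad\text{for all }t\ge1.$$ *)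

theory Defs
  imports "HOL-Analysis.Analysis"
begin

definition dbar :: "real \<Rightarrow> real" where "dbar t = 3 / (2 * (t + 2))"
definition betabar :: "real \<Rightarrow> real" where "betabar t = (t - 1) / (t + 2)"
definition abar :: "real \<Rightarrow> real" where "abar t = 2 / (t + 2)"

definition V1 :: "('a::euclidean_space \<Rightarrow> real) \<Rightarrow> 'a \<Rightarrow> real \<Rightarrow> real \<Rightarrow> 'a \<Rightarrow> 'a \<Rightarrow> real \<Rightarrow> real" where
  "V1 L zs \<zeta> M z1 z2 \<tau> =
     (1/2) * (norm (abar \<tau> *\<^sub>R (z1 - zs) + z2))\<^sup>2 + (\<zeta>\<^sup>2 / M) * (L z1 - L zs)"

definition hb_solution :: "('a::euclidean_space \<Rightarrow> 'a) \<Rightarrow> real \<Rightarrow> real \<Rightarrow> real set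
    \<Rightarrow> (real \<Rightarrow> 'a) \<Rightarrow> (real \<Rightarrow> 'a) \<Rightarrow> (real \<Rightarrow> real) \<Rightarrow> bool" where
  "hb_solution gL \<zeta> M J z1 z2 \<tau> \<longleftrightarrow>
     is_interval J \<and> 0 \<in> J \<and> \<tau> 0 = 0 \<and>
     (\<forall>t\<in>J. \<tau> t \<ge> 0 \<and>
        (z1 has_vector_derivative z2 t) (at t within J) \<and>
        (z2 has_vector_derivative
            (- (2 * dbar (\<tau> t)) *\<^sub>R z2 t - (\<zeta>\<^sup>2 / M) *\<^sub>R gL (z1 t + betabar (\<tau> t) *\<^sub>R z2 t)))
          (at t within J) \<and>
        (\<tau> has_real_derivative 1) (at t within J))"

definition hb_maximal_solution :: "('a::euclidean_space \<Rightarrow> 'a) \<Rightarrow> real \<Rightarrow> real \<Rightarrow> real set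
    \<Rightarrow> (real \<Rightarrow> 'a) \<Rightarrow> (real \<Rightarrow> 'a) \<Rightarrow> (real \<Rightarrow> real) \<Rightarrow> bool" where
  "hb_maximal_solution gL \<zeta> M J z1 z2 \<tau> \<longleftrightarrow>
     hb_solution gL \<zeta> M J z1 z2 \<tau> \<and>
     \<not> (\<exists>J' w1 w2 \<sigma>. J \<subset> J' \<and> hb_solution gL \<zeta> M J' w1 w2 \<sigma> \<and>
          (\<forall>t\<in>J. w1 t = z1 t \<and> w2 t = z2 t \<and> \<sigma> t = \<tau> t))"

end

theory Submission
  imports Defs
begin

text \<open>Since \<open>\<tau> t = t\<close>, the scaled function \<open>(t + 2)\<^sup>2 V\<^sub>1\<close> is the energy
  \<open>W = 1/2 |2(z\<^sub>1 - z\<^sup>*) + (t + 2) z\<^sub>2|\<^sup>2 + \<epsilon> (t + 2)\<^sup>2 (L z\<^sub>1 - L\<^sup>*)\<close> with \<open>\<epsilon> = \<zeta>\<^sup>2/M\<close>.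
  The damping \<open>2 d(t) = 3/(t + 2)\<close> is exactly what makes the derivative of
  \<open>2(z\<^sub>1 - z\<^sup>*) + (t + 2) z\<^sub>2\<close> equal to \<open>-\<epsilon> (t + 2) \<nabla>L(y)\<close>, where \<open>y = z\<^sub>1 + \<beta>(t) z\<^sub>2\<close>.
  The gradient inequalities at \<open>y\<close> towards \<open>z\<^sup>*\<close> and at \<open>z\<^sub>1\<close> towards \<open>y\<close> then bound
  \<open>W'\<close> by \<open>\<epsilon> (t + 2) (2\<beta> - t - 2) (\<nabla>L(y) - \<nabla>L(z\<^sub>1)) \<bullet> z\<^sub>2\<close>, which is \<open>\<le> 0\<close> by
  monotonicity of the gradient because \<open>0 \<le> \<beta>(t) < 1\<close> for \<open>t \<ge> 1\<close>. So \<open>W\<close> is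
  nonincreasing on \<open>[1, \<infinity>)\<close>.\<close>

lemma convex_on_gradient_inequality:
  fixes L :: "'a::real_inner \<Rightarrow> real"
  assumes grad: "\<And>x. (L has_derivative (\<lambda>h. gL x \<bullet> h)) (at x)"
    and conv: "convex_on UNIV L"
  shows "L x + gL x \<bullet> (y - x) \<le> L y"
proof -
  define \<phi> where "\<phi> s = L (x + s *\<^sub>R (y - x))" for s :: real
  have "convex_on UNIV \<phi>"
  proof (rule convex_onI)
    fix t a b :: real assume t: "0 < t" "t < 1"
    have "x + ((1 - t) * a + t * b) *\<^sub>R (y - x)
        = (1 - t) *\<^sub>R (x + a *\<^sub>R (y - x)) + t *\<^sub>R (x + b *\<^sub>R (y - x))"
      by (simp add: algebra_simps)
    then show "\<phi> ((1 - t) *\<^sub>R a + t *\<^sub>R b) \<le> (1 - t) * \<phi> a + t * \<phi> b"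
      unfolding \<phi>_def using convex_onD[OF conv, of t] t by simp
  qed simp
  moreover have "(\<phi> has_real_derivative gL x \<bullet> (y - x)) (at 0)"
  proof -
    have line: "((\<lambda>s. x + s *\<^sub>R (y - x)) has_derivative (\<lambda>h. h *\<^sub>R (y - x))) (at 0)"
      by (auto intro!: derivative_eq_intros)
    have "(\<phi> has_derivative (\<lambda>h. gL x \<bullet> (h *\<^sub>R (y - x)))) (at 0)"
      unfolding \<phi>_def using diff_chain_at[OF line, of L "\<lambda>h. gL x \<bullet> h"] grad[of x]
      by (simp add: o_def)
    then show ?thesis
      unfolding has_field_derivative_def
      by (rule has_derivative_eq_rhs) (simp add: fun_eq_iff)
  qed
  ultimately have "gL x \<bullet> (y - x) * (1 - 0) \<le> \<phi> 1 - \<phi> 0"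
    by (intro convex_on_imp_above_tangent) auto
  then show ?thesis
    by (simp add: \<phi>_def)
qed

lemma gradient_monotone:
  fixes L :: "'a::real_inner \<Rightarrow> real"
  assumes tangent: "\<And>x y. L x + gL x \<bullet> (y - x) \<le> L y"
  shows "0 \<le> (gL x - gL y) \<bullet> (x - y)"
  using tangent[of x y] tangent[of y x] by (simp add: inner_simps)

lemma convex_hb_dissipation_nonpos:
  fixes L :: "'a::real_inner \<Rightarrow> real"
  assumes tangent: "\<And>x y. L x + gL x \<bullet> (y - x) \<le> L y"
    and \<beta>: "0 \<le> \<beta>" "2 * \<beta> \<le> s"
  shows "2 * (L x - L zs) + s * (gL x \<bullet> v) - gL (x + \<beta> *\<^sub>R v) \<bullet> (2 *\<^sub>R (x - zs) + s *\<^sub>R v) \<le> 0"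
proof -
  define y where "y = x + \<beta> *\<^sub>R v"
  have mono: "0 \<le> (gL y - gL x) \<bullet> v"
  proof (cases "\<beta> = 0")
    case False
    with \<beta> gradient_monotone[OF tangent, of y x] show ?thesis
      by (simp add: y_def zero_le_mult_iff)
  qed (simp add: y_def)
  have "L y + gL y \<bullet> (zs - y) \<le> L zs" "L x + gL x \<bullet> (y - x) \<le> L y"
    by (fact tangent)+
  then have "2 * (L x - L zs) + s * (gL x \<bullet> v) - gL y \<bullet> (2 *\<^sub>R (x - zs) + s *\<^sub>R v)
      \<le> (2 * \<beta> - s) * ((gL y - gL x) \<bullet> v)"
    by (simp add: y_def inner_simps algebra_simps)
  also have "\<dots> \<le> 0"
    using mono \<beta> by (simp add: mult_nonpos_nonneg)
  finally show ?thesis by (simp add: y_def)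
qed

lemma nonincreasing_if_derivative_nonpos_within:
  fixes f :: "real \<Rightarrow> real"
  assumes "a \<le> b" "{a..b} \<subseteq> S"
    and deriv: "\<And>x. x \<in> {a..b} \<Longrightarrow> (f has_real_derivative f' x) (at x within S)"
    and nonpos: "\<And>x. x \<in> {a..b} \<Longrightarrow> f' x \<le> 0"
  shows "f b \<le> f a"
proof -
  have "\<exists>\<xi>\<in>{a..b}. f b - f a = (\<lambda>h. h * f' \<xi>) (b - a)"
  proof (rule mvt_very_simple)
    fix x assume "a \<le> x" "x \<le> b"
    with has_field_derivative_subset[OF deriv \<open>{a..b} \<subseteq> S\<close>]
    show "(f has_derivative (\<lambda>h. h * f' x)) (at x within {a..b})"
      by (simp add: has_field_derivative_def mult_commute_abs)
  qed fact
  then obtain \<xi> where "\<xi> \<in> {a..b}" "f b - f a = (b - a) * f' \<xi>"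
    by auto
  with nonpos[of \<xi>] \<open>a \<le> b\<close> show ?thesis
    by (smt (verit) mult_nonneg_nonpos)
qed

lemma hb_solution_tau_eq:
  assumes "hb_solution gL \<zeta> M J z1 z2 \<tau>" "t \<in> J"
  shows "\<tau> t = t"
proof -
  have "\<exists>c. \<forall>t\<in>J. \<tau> t - t = c"
  proof (rule has_field_derivative_zero_constant)
    show "convex J"
      using assms(1) by (simp add: hb_solution_def is_interval_convex)
    fix t assume "t \<in> J"
    with assms(1) have "(\<tau> has_real_derivative 1) (at t within J)"
      by (simp add: hb_solution_def)
    then show "((\<lambda>t. \<tau> t - t) has_real_derivative 0) (at t within J)"
      by (auto intro!: derivative_eq_intros)
  qed
  then obtain c where c: "\<forall>t\<in>J. \<tau> t - t = c"
    by blast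
  moreover have "0 \<in> J" "\<tau> 0 = 0"
    using assms(1) by (simp_all add: hb_solution_def)
  ultimately have "c = 0"
    by force
  with c assms(2) show ?thesis
    by auto
qed

lemma has_real_derivative_norm_squared:
  fixes f :: "real \<Rightarrow> 'a::real_inner"
  assumes "(f has_vector_derivative f') (at t within S)"
  shows "((\<lambda>t. (norm (f t))\<^sup>2) has_real_derivative 2 * (f t \<bullet> f')) (at t within S)"
  using has_derivative_inner[OF assms[unfolded has_vector_derivative_def] assms[unfolded has_vector_derivative_def]]
  unfolding power2_norm_eq_inner has_field_derivative_def
  by (rule has_derivative_eq_rhs) (auto simp: fun_eq_iff inner_commute algebra_simps)

definition hb_energy :: "('a::real_inner \<Rightarrow> real) \<Rightarrow> 'a \<Rightarrow> real \<Rightarrow> 'a \<Rightarrow> 'a \<Rightarrow> real \<Rightarrow> real" where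
  "hb_energy L zs \<epsilon> x v t =
     (1/2) * (norm (2 *\<^sub>R (x - zs) + (t + 2) *\<^sub>R v))\<^sup>2 + \<epsilon> * (t + 2)\<^sup>2 * (L x - L zs)"

lemma hb_energy_eq_V1:
  assumes "t + 2 \<noteq> 0"
  shows "hb_energy L zs (\<zeta>\<^sup>2 / M) x v t = (t + 2)\<^sup>2 * V1 L zs \<zeta> M x v t"
proof -
  have "(t + 2) * abar t = 2"
    using assms by (simp add: abar_def field_simps)
  then have "2 *\<^sub>R (x - zs) + (t + 2) *\<^sub>R v = (t + 2) *\<^sub>R (abar t *\<^sub>R (x - zs) + v)"
    by (simp add: scaleR_add_right)
  then have "(norm (2 *\<^sub>R (x - zs) + (t + 2) *\<^sub>R v))\<^sup>2
      = (t + 2)\<^sup>2 * (norm (abar t *\<^sub>R (x - zs) + v))\<^sup>2"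
    by (simp add: power_mult_distrib)
  then show ?thesis
    by (simp add: hb_energy_def V1_def algebra_simps)
qed

lemma hb_energy_has_derivative:
  fixes L :: "'a::euclidean_space \<Rightarrow> real"
  assumes grad: "\<And>x. (L has_derivative (\<lambda>h. gL x \<bullet> h)) (at x)"
    and sol: "hb_solution gL \<zeta> M J z1 z2 \<tau>" and t: "t \<in> J"
  shows "((\<lambda>t. hb_energy L zs (\<zeta>\<^sup>2 / M) (z1 t) (z2 t) t) has_real_derivative
      \<zeta>\<^sup>2 / M * (t + 2) * (2 * (L (z1 t) - L zs) + (t + 2) * (gL (z1 t) \<bullet> z2 t)
        - gL (z1 t + betabar t *\<^sub>R z2 t) \<bullet> (2 *\<^sub>R (z1 t - zs) + (t + 2) *\<^sub>R z2 t)))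
      (at t within J)"
proof -
  define \<epsilon> where "\<epsilon> = \<zeta>\<^sup>2 / M"
  define g where "g = gL (z1 t + betabar t *\<^sub>R z2 t)"
  define p where "p t = 2 *\<^sub>R (z1 t - zs) + (t + 2) *\<^sub>R z2 t" for t
  have "\<tau> t = t"
    using hb_solution_tau_eq[OF sol t] .
  with sol t have "0 \<le> t"
    and z1': "(z1 has_vector_derivative z2 t) (at t within J)"
    and z2': "(z2 has_vector_derivative - (2 * dbar t) *\<^sub>R z2 t - \<epsilon> *\<^sub>R g) (at t within J)"
    unfolding hb_solution_def \<epsilon>_def g_def by auto
  have damping: "(t + 2) * (2 * dbar t) = 3"
    using \<open>0 \<le> t\<close> by (simp add: dbar_def field_simps)
  have "(p has_vector_derivative
      2 *\<^sub>R z2 t + ((t + 2) *\<^sub>R (- (2 * dbar t) *\<^sub>R z2 t - \<epsilon> *\<^sub>R g) + z2 t)) (at t within J)"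
    unfolding p_def by (rule derivative_eq_intros z1' z2' refl | simp)+
  also have "2 *\<^sub>R z2 t + ((t + 2) *\<^sub>R (- (2 * dbar t) *\<^sub>R z2 t - \<epsilon> *\<^sub>R g) + z2 t)
      = (3 - (t + 2) * (2 * dbar t)) *\<^sub>R z2 t - (\<epsilon> * (t + 2)) *\<^sub>R g"
    by (simp add: algebra_simps scaleR_add_left[of 1 2, simplified])
  finally have p': "(p has_vector_derivative - (\<epsilon> * (t + 2)) *\<^sub>R g) (at t within J)"
    by (simp add: damping)
  have L': "((\<lambda>t. L (z1 t)) has_real_derivative gL (z1 t) \<bullet> z2 t) (at t within J)"
    using diff_chain_within[OF z1'[unfolded has_vector_derivative_def] has_derivative_at_withinI[OF grad]]
    unfolding has_field_derivative_def o_def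
    by (rule has_derivative_eq_rhs) (simp add: fun_eq_iff)
  show ?thesis
    unfolding hb_energy_def \<epsilon>_def[symmetric] g_def[symmetric] p_def[symmetric]
    by (rule has_real_derivative_norm_squared[OF p'] L' derivative_eq_intros refl | simp)+
      (simp add: p_def algebra_simps power2_eq_square inner_commute)
qed

lemma hb_energy_nonincreasing:
  fixes L :: "'a::euclidean_space \<Rightarrow> real"
  assumes grad: "\<And>x. (L has_derivative (\<lambda>h. gL x \<bullet> h)) (at x)"
    and conv: "convex_on UNIV L"
    and "0 \<le> M"
    and sol: "hb_solution gL \<zeta> M J z1 z2 \<tau>" and t: "t \<in> J" "1 \<le> t"
  shows "hb_energy L zs (\<zeta>\<^sup>2 / M) (z1 t) (z2 t) t \<le> hb_energy L zs (\<zeta>\<^sup>2 / M) (z1 1) (z2 1) 1"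
proof -
  have "is_interval J" "0 \<in> J"
    using sol by (simp_all add: hb_solution_def)
  with t have sub: "{1..t} \<subseteq> J"
    unfolding is_interval_1 by fastforce
  define D where "D s = \<zeta>\<^sup>2 / M * (s + 2) * (2 * (L (z1 s) - L zs) + (s + 2) * (gL (z1 s) \<bullet> z2 s)
      - gL (z1 s + betabar s *\<^sub>R z2 s) \<bullet> (2 *\<^sub>R (z1 s - zs) + (s + 2) *\<^sub>R z2 s))" for s
  show ?thesis
  proof (rule nonincreasing_if_derivative_nonpos_within[OF t(2) sub])
    fix s assume "s \<in> {1..t}"
    with sub show "((\<lambda>t. hb_energy L zs (\<zeta>\<^sup>2 / M) (z1 t) (z2 t) t) has_real_derivative D s) (at s within J)"
      unfolding D_def by (intro hb_energy_has_derivative[OF grad sol]) auto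
  next
    fix s assume s: "s \<in> {1..t}"
    then have "0 \<le> betabar s" "2 * betabar s \<le> s + 2"
      by (simp_all add: betabar_def field_simps)
    from convex_hb_dissipation_nonpos[OF convex_on_gradient_inequality[OF grad conv] this]
    show "D s \<le> 0"
      unfolding D_def using \<open>0 \<le> M\<close> s by (intro mult_nonneg_nonpos) auto
  qed
qed

theorem proposition5p4:
  fixes L :: "'a::euclidean_space \<Rightarrow> real" and gL :: "'a \<Rightarrow> 'a"
    and zs :: 'a and M \<zeta> :: real
    and J :: "real set" and z1 z2 :: "real \<Rightarrow> 'a" and \<tau> :: "real \<Rightarrow> real"
  assumes grad: "\<And>x. (L has_derivative (\<lambda>h. gL x \<bullet> h)) (at x)"
    and C1: "continuous_on UNIV gL"
    and conv: "convex_on UNIV L"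
    and min: "\<And>x. L zs \<le> L x"
    and unique_min: "\<And>x. (\<forall>y. L x \<le> L y) \<Longrightarrow> x = zs"
    and M_pos: "M > 0"
    and lip: "\<And>x y. norm (gL x - gL y) \<le> M * norm (x - y)"
    and zeta_pos: "\<zeta> > 0"
    and sol: "hb_maximal_solution gL \<zeta> M J z1 z2 \<tau>"
  shows "\<forall>t\<in>J. t \<ge> 1 \<longrightarrow>
           V1 L zs \<zeta> M (z1 t) (z2 t) t \<le> 9 / (t + 2)\<^sup>2 * V1 L zs \<zeta> M (z1 1) (z2 1) 1"
proof (intro ballI impI)
  fix t assume t: "t \<in> J" "1 \<le> t"
  have "hb_solution gL \<zeta> M J z1 z2 \<tau>"
    using sol by (simp add: hb_maximal_solution_def)
  with t have "hb_energy L zs (\<zeta>\<^sup>2 / M) (z1 t) (z2 t) t \<le> hb_energy L zs (\<zeta>\<^sup>2 / M) (z1 1) (z2 1) 1"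
    using M_pos by (intro hb_energy_nonincreasing[OF grad conv]) auto
  then have "(t + 2)\<^sup>2 * V1 L zs \<zeta> M (z1 t) (z2 t) t \<le> 9 * V1 L zs \<zeta> M (z1 1) (z2 1) 1"
    using t by (simp add: hb_energy_eq_V1)
  with t show "V1 L zs \<zeta> M (z1 t) (z2 t) t \<le> 9 / (t + 2)\<^sup>2 * V1 L zs \<zeta> M (z1 1) (z2 1) 1"
    by (simp add: field_simps)
qed

end
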